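(* Let $\beta\geq2$ be an integer, and let $$u(z)=\frac{(1-|z|^2)^{2\beta-1}}{|1-z|^{2\beta}},\quad z\in\mathbb{D}.$$ Then there exist real constants $a$ and $b$ such that for every $\varphi\in C^2(\mathbb{T})$, $$\langle u_r,\varphi\rangle=a\varphi(1)+b(1-r)\varphi(1)+O((1-r)^2)\quad\text{as } r\to1.$$ In particular, the distributional boundary value and inward normal derivative of $u$ are $$f_0=\lim_{r\to1}u_r=a\delta_1\quad\text{and}\quad f_1=\partial_n u=\lim_{r\to1}(u_r-f_0)/(1-r)=b\delta_1\quad\text{in }\mathcal{D}'(\mathbb{T}).$$
   Context: $\mathbb{D}$ is the open unit disc and $\mathbb{T}=\partial\mathbb{D}$ the unit circle. For a function $u$ on $\mathbb{D}$ and $0\le r<1$, $u_r$ denotes the function on $\mathbb{T}$ given by $u_r(e^{i\theta})=u(re^{i\theta})$. The pairing is $\langle g,\varphi\rangle=\frac{1}{2\pi}\int_0^{2\pi}g(e^{i\theta})\varphi(e^{i\theta})\,d\theta$ for integrable $g$, extended to distributions $\mathcal{D}'(\mathbb{T})$ in the standard way; $\delta_1$ is the unit Dirac mass at $1\in\mathbb{T}$, i.e. $\langle\delta_1,\varphi\rangle=\varphi(1)$. Limits in $\mathcal{D}'(\mathbb{T})$ are in the distributional (weak) sense. *)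

theory Defs
  imports "HOL-Analysis.Analysis" "HOL-Library.Landau_Symbols"
begin

definition u_fun :: "nat \<Rightarrow> complex \<Rightarrow> real" where
  "u_fun \<beta> z = (1 - (cmod z)^2) ^ (2*\<beta> - 1) / (cmod (1 - z)) ^ (2*\<beta>)"

definition C2_circle :: "(complex \<Rightarrow> complex) \<Rightarrow> bool" where
  "C2_circle \<phi> \<longleftrightarrow> (\<exists>\<phi>1 \<phi>2.
      (\<forall>t. ((\<lambda>\<theta>. \<phi> (cis \<theta>)) has_vector_derivative \<phi>1 t) (at t)) \<and>
      (\<forall>t. (\<phi>1 has_vector_derivative \<phi>2 t) (at t)) \<and>
      continuous_on UNIV \<phi>2)"

definition pairing :: "(complex \<Rightarrow> complex) \<Rightarrow> (complex \<Rightarrow> complex) \<Rightarrow> complex" where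
  "pairing g \<phi> = integral {0..2*pi} (\<lambda>\<theta>. g (cis \<theta>) * \<phi> (cis \<theta>)) / of_real (2*pi)"

definition restr :: "(complex \<Rightarrow> real) \<Rightarrow> real \<Rightarrow> complex \<Rightarrow> complex" where
  "restr u r w = of_real (u (of_real r * w))"

end

theory Submission
  imports Defs "HOL-Computational_Algebra.Polynomial"
begin

text \<open>
  In polar coordinates u_r(e^(it)) = (1 - r^2)^(2 beta - 1) / D^beta with
  D = |1 - r e^(it)|^2 = 1 + r^2 - 2 r cos t. Differentiating sin t / D^n gives a three-term
  recurrence for the integrals of D^(-n), starting from the Poisson kernel integral for n = 1;
  hence the mean M_n(r) of u_r (with beta = n) is a polynomial in 1 - r.
  Expand phi(e^(it)) = phi(1) + v sin t + R(t), where v is the t-derivative at t = 0 and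
  |R(t)| <= C (1 - cos t) by Taylor's formula on [-pi, pi] and periodicity. The sine term
  integrates to zero against the even kernel, and since 2 r (1 - cos t) = D - (1 - r)^2 the
  remainder contributes at most C (1 - r^2)^2 M_(beta-1)(r) / (2 r) = O((1 - r)^2).
  So a and b are the first two Taylor coefficients of M_beta at r = 1.
\<close>

section \<open>Estimates on the real line\<close>

lemma fundamental_theorem_of_calculus_real:
  assumes "a \<le> b" "\<And>t. (F has_real_derivative f t) (at t)"
  shows "(f has_integral F b - F a) {a..b}"
  using assms by (intro fundamental_theorem_of_calculus)
    (auto simp: has_real_derivative_iff_has_vector_derivative intro: has_vector_derivative_at_within)

lemma norm_diff_le_vector_derivative_bound:
  fixes f :: "real \<Rightarrow> 'a::real_normed_vector"
  assumes "\<And>s. s \<in> closed_segment a b \<Longrightarrow> (f has_vector_derivative f' s) (at s)"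
    and "\<And>s. s \<in> closed_segment a b \<Longrightarrow> norm (f' s) \<le> B"
  shows "norm (f b - f a) \<le> B * \<bar>b - a\<bar>"
proof -
  have "norm (f b - f a) \<le> B * norm (b - a)"
  proof (rule differentiable_bound[of "closed_segment a b" f "\<lambda>s h. h *\<^sub>R f' s"])
    show "(f has_derivative (\<lambda>h. h *\<^sub>R f' s)) (at s within closed_segment a b)"
      if "s \<in> closed_segment a b" for s
      using assms(1)[OF that] unfolding has_vector_derivative_def by (rule has_derivative_at_withinI)
    show "onorm (\<lambda>h. h *\<^sub>R f' s) \<le> B" if "s \<in> closed_segment a b" for s
    proof (rule onorm_le)
      fix h :: real
      have "norm (h *\<^sub>R f' s) \<le> \<bar>h\<bar> * B"
        using assms(2)[OF that] by (simp add: mult_left_mono)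
      then show "norm (h *\<^sub>R f' s) \<le> B * norm h"
        by (simp add: mult.commute)
    qed
  qed auto
  then show ?thesis
    by simp
qed

lemma taylor_second_order_bound:
  fixes f :: "real \<Rightarrow> 'a::real_normed_vector"
  assumes f': "\<And>s. s \<in> closed_segment a x \<Longrightarrow> (f has_vector_derivative f' s) (at s)"
    and f'': "\<And>s. s \<in> closed_segment a x \<Longrightarrow> (f' has_vector_derivative f'' s) (at s)"
    and M: "\<And>s. s \<in> closed_segment a x \<Longrightarrow> norm (f'' s) \<le> M"
  shows "norm (f x - f a - (x - a) *\<^sub>R f' a) \<le> M * (x - a)\<^sup>2"
proof -
  have "0 \<le> M"
    using M[of a] by (meson ends_in_segment(1) norm_ge_zero order_trans)
  have "norm (f' s - f' a) \<le> M * \<bar>x - a\<bar>" if s: "s \<in> closed_segment a x" for s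
  proof -
    have sub: "closed_segment a s \<subseteq> closed_segment a x"
      using s by (simp add: subset_closed_segment)
    then have "norm (f' s - f' a) \<le> M * \<bar>s - a\<bar>"
      using f'' M by (intro norm_diff_le_vector_derivative_bound) auto
    also have "\<dots> \<le> M * \<bar>x - a\<bar>"
      using \<open>0 \<le> M\<close> dist_in_closed_segment[OF s] by (intro mult_left_mono) (auto simp: dist_real_def)
    finally show ?thesis .
  qed
  then have "norm (f x - f a - (x - a) *\<^sub>R f' a) \<le> norm (x - a) * (M * \<bar>x - a\<bar>)"
    using f' by (intro vector_differentiable_bound_linearization[of "closed_segment a x"])
      (auto intro: has_vector_derivative_at_within)
  then show ?thesis
    by (simp add: power2_eq_square mult_ac)
qed

lemma square_le_one_minus_cos:
  fixes x :: real
  assumes "\<bar>x\<bar> \<le> pi"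
  shows "x\<^sup>2 \<le> 18 * (1 - cos x)"
proof -
  define y where "y = x / 2"
  have y: "\<bar>y\<bar> \<le> 2"
    using assms pi_less_4 unfolding y_def by simp
  have "\<bar>sin y - y\<bar> \<le> \<bar>y\<bar> ^ 3 / 6"
    using Maclaurin_sin_bound[of y 3] by (simp add: numeral_3_eq_3 sin_coeff_def)
  also have "\<dots> = \<bar>y\<bar> * (y\<^sup>2 / 6)"
    by (simp add: power3_eq_cube power2_eq_square)
  also have "\<dots> \<le> \<bar>y\<bar> * (2 / 3)"
    using y abs_le_square_iff[of y 2] by (intro mult_left_mono) auto
  finally have "\<bar>y\<bar> / 3 \<le> \<bar>sin y\<bar>"
    using abs_triangle_ineq2[of y "sin y"] by (simp add: abs_minus_commute)
  then have "(y / 3)\<^sup>2 \<le> (sin y)\<^sup>2"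
    using abs_le_square_iff[of "y / 3" "sin y"] by simp
  moreover have "1 - cos x = 2 * (sin y)\<^sup>2"
    using cos_double_sin[of y] unfolding y_def by simp
  ultimately show ?thesis
    unfolding y_def by (simp add: power_divide)
qed

lemma bigoI_tendsto_factor:
  fixes f :: "'a \<Rightarrow> 'b::real_normed_field" and h :: "'a \<Rightarrow> real"
  assumes "\<forall>\<^sub>F x in F. norm (f x) \<le> h x * norm (g x)" and "(h \<longlongrightarrow> c) F"
  shows "f \<in> O[F](g)"
proof (rule bigoI)
  have "\<forall>\<^sub>F x in F. h x < c + 1"
    using order_tendstoD(2)[OF assms(2)] by simp
  with assms(1) show "\<forall>\<^sub>F x in F. norm (f x) \<le> (c + 1) * norm (g x)"
    by eventually_elim (meson less_imp_le mult_right_mono norm_ge_zero order_trans)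
qed

section \<open>Integrals of powers of the Poisson denominator\<close>

definition poisson_denom :: "real \<Rightarrow> real \<Rightarrow> real" where
  "poisson_denom r t = 1 + r\<^sup>2 - 2 * r * cos t"

definition denom_power_integral :: "nat \<Rightarrow> real \<Rightarrow> real" where
  "denom_power_integral n r = integral {0..2*pi} (\<lambda>t. 1 / poisson_denom r t ^ n)"

text \<open>The mean of u_r over the circle (see u_fun_polar); for n = 0 the truncated exponent
  2 n - 1 = 0 makes it 1.\<close>

definition u_mean :: "nat \<Rightarrow> real \<Rightarrow> real" where
  "u_mean n r = (1 - r\<^sup>2) ^ (2*n - 1) * denom_power_integral n r / (2*pi)"

lemma poisson_denom_eq: "poisson_denom r t = (1 - r)\<^sup>2 + 2 * r * (1 - cos t)"
  by (simp add: poisson_denom_def power2_eq_square algebra_simps)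

lemma poisson_denom_pos: "0 \<le> r \<Longrightarrow> r < 1 \<Longrightarrow> 0 < poisson_denom r t"
  unfolding poisson_denom_eq by (simp add: add_pos_nonneg)

lemma poisson_denom_nonzero: "0 \<le> r \<Longrightarrow> r < 1 \<Longrightarrow> poisson_denom r t \<noteq> 0"
  using poisson_denom_pos[of r t] by linarith

lemma norm_one_minus_cis_squared: "(cmod (1 - of_real r * cis t))\<^sup>2 = poisson_denom r t"
proof -
  have "(cmod (1 - of_real r * cis t))\<^sup>2 = (1 - r * cos t)\<^sup>2 + (r * sin t)\<^sup>2"
    by (simp add: cmod_power2)
  also have "\<dots> = (1 - r * cos t)\<^sup>2 + r\<^sup>2 * (1 - (cos t)\<^sup>2)"
    by (simp add: power_mult_distrib sin_squared_eq)
  also have "\<dots> = poisson_denom r t"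
    by (simp add: poisson_denom_def power2_eq_square algebra_simps)
  finally show ?thesis .
qed

lemma u_fun_polar:
  "0 \<le> r \<Longrightarrow> u_fun \<beta> (of_real r * cis t) = (1 - r\<^sup>2) ^ (2*\<beta> - 1) / poisson_denom r t ^ \<beta>"
  by (simp add: u_fun_def norm_mult power_mult norm_one_minus_cis_squared)

lemma continuous_on_poisson_denom [continuous_intros]:
  "continuous_on S (\<lambda>t. poisson_denom r t)"
  unfolding poisson_denom_def by (intro continuous_intros)

lemma poisson_denom_derivative:
  "((\<lambda>t. poisson_denom r t) has_real_derivative 2 * r * sin t) (at t)"
  unfolding poisson_denom_def by (auto intro!: derivative_eq_intros)

lemma has_integral_denom_power:
  assumes "0 \<le> r" "r < 1"
  shows "((\<lambda>t. c / poisson_denom r t ^ n) has_integral c * denom_power_integral n r) {0..2*pi}"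
proof -
  have "continuous_on {0..2*pi} (\<lambda>t. 1 / poisson_denom r t ^ n)"
    using poisson_denom_nonzero[OF assms] by (intro continuous_intros) simp
  then have "((\<lambda>t. 1 / poisson_denom r t ^ n) has_integral denom_power_integral n r) {0..2*pi}"
    unfolding denom_power_integral_def by (intro integrable_integral integrable_continuous_interval)
  from has_integral_mult_right[OF this, of c] show ?thesis
    by simp
qed

lemma denom_power_integral_0: "denom_power_integral 0 r = 2 * pi"
  by (simp add: denom_power_integral_def)

lemma poisson_kernel_antiderivative:
  assumes "0 \<le> r" "r < 1"
  shows "((\<lambda>t. t + 2 * arctan (r * sin t / (1 - r * cos t))) has_real_derivative
           (1 - r\<^sup>2) / poisson_denom r t) (at t)"
proof -
  define a where "a = 1 - r * cos t"
  have "r * cos t \<le> r"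
    using assms by (simp add: mult_left_le)
  then have a: "0 < a"
    using assms unfolding a_def by linarith
  have D: "poisson_denom r t = a\<^sup>2 + (r * sin t)\<^sup>2"
    using norm_one_minus_cis_squared[of r t] by (simp add: cmod_power2 a_def)
  have inv: "inverse (1 + (r * sin t / a)\<^sup>2) = a\<^sup>2 / poisson_denom r t"
    using a unfolding D by (simp add: field_simps)
  have num: "r * cos t * a - r * sin t * (r * sin t) = r * cos t - r\<^sup>2"
    using sin_cos_squared_add[of t] unfolding a_def by algebra
  have "1 + 2 * (inverse (1 + (r * sin t / a)\<^sup>2) *
          ((r * cos t * a - r * sin t * (r * sin t)) / a\<^sup>2))
        = 1 + 2 * (r * cos t - r\<^sup>2) / poisson_denom r t"
    unfolding inv num using a poisson_denom_nonzero[OF assms, of t] by (simp add: field_simps)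
  also have "\<dots> = (1 - r\<^sup>2) / poisson_denom r t"
    using poisson_denom_nonzero[OF assms, of t] by (simp add: field_simps poisson_denom_def)
  finally have deriv: "1 + 2 * (inverse (1 + (r * sin t / a)\<^sup>2) *
          ((r * cos t * a - r * sin t * (r * sin t)) / a\<^sup>2)) = (1 - r\<^sup>2) / poisson_denom r t" .
  have "((\<lambda>t. t + 2 * arctan (r * sin t / (1 - r * cos t))) has_real_derivative
           1 + 2 * (inverse (1 + (r * sin t / a)\<^sup>2) *
             ((r * cos t * a - r * sin t * (r * sin t)) / a\<^sup>2))) (at t)"
    using a unfolding a_def by (auto intro!: derivative_eq_intros simp: power2_eq_square)
  then show ?thesis
    unfolding deriv .
qed

lemma denom_power_integral_1:
  assumes "0 \<le> r" "r < 1"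
  shows "denom_power_integral 1 r = 2 * pi / (1 - r\<^sup>2)"
proof -
  have "((\<lambda>t. (1 - r\<^sup>2) / poisson_denom r t) has_integral
                   (1 - r\<^sup>2) * denom_power_integral 1 r) {0..2*pi}"
    using has_integral_denom_power[OF assms, of "1 - r\<^sup>2" 1] by simp
  moreover have "((\<lambda>t. (1 - r\<^sup>2) / poisson_denom r t) has_integral 2 * pi) {0..2*pi}"
    using fundamental_theorem_of_calculus_real[OF _ poisson_kernel_antiderivative[OF assms], of 0 "2*pi"]
    by simp
  ultimately have "(1 - r\<^sup>2) * denom_power_integral 1 r = 2 * pi"
    by (rule has_integral_unique)
  moreover have "r\<^sup>2 < 1"
    using assms by (simp add: abs_square_less_1)
  ultimately show ?thesis
    by (simp add: field_simps)
qed

lemma sin_over_denom_power_derivative: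
  assumes "0 < r" "r < 1"
  shows "((\<lambda>t. sin t / poisson_denom r t ^ Suc m) has_real_derivative
           (real (Suc m) * (1 - r\<^sup>2)\<^sup>2 / poisson_denom r t ^ Suc (Suc m)
            + (1 + r\<^sup>2) * (1 - 2 * real (Suc m)) / poisson_denom r t ^ Suc m
            + real m / poisson_denom r t ^ m) / (2 * r)) (at t)"
proof -
  define D where "D = poisson_denom r t"
  define X where "X = D ^ m"
  have D: "D \<noteq> 0" and X: "X \<noteq> 0"
    using poisson_denom_nonzero assms unfolding X_def D_def by simp_all
  have key: "2 * r * (cos t * D - (1 + real m) * (2 * r * sin t * sin t))
      = real (Suc m) * (1 - r\<^sup>2)\<^sup>2 + (1 + r\<^sup>2) * (1 - 2 * real (Suc m)) * D + real m * D\<^sup>2"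
    using sin_cos_squared_add[of t] unfolding D_def poisson_denom_def of_nat_Suc by algebra
  have "((\<lambda>t. sin t / poisson_denom r t ^ Suc m) has_real_derivative
          (cos t * D ^ Suc m - sin t * ((1 + real m) * (2 * r * sin t * D ^ m)))
            / (D ^ Suc m * D ^ Suc m)) (at t)"
    unfolding D_def using D[unfolded D_def]
    by (intro DERIV_divide DERIV_sin DERIV_power_Suc poisson_denom_derivative) simp
  also have "(cos t * D ^ Suc m - sin t * ((1 + real m) * (2 * r * sin t * D ^ m)))
            / (D ^ Suc m * D ^ Suc m)
      = 2 * r * (cos t * D - (1 + real m) * (2 * r * sin t * sin t)) / (2 * r * (D * (D * X)))"
    unfolding power_Suc X_def[symmetric] using D X assms(1) by (simp add: field_simps)
  also have "\<dots> = (real (Suc m) * (1 - r\<^sup>2)\<^sup>2 / (D * (D * X))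
         + (1 + r\<^sup>2) * (1 - 2 * real (Suc m)) / (D * X) + real m / X) / (2 * r)"
    unfolding key using D X assms(1) by (simp add: field_simps power2_eq_square)
  finally show ?thesis
    unfolding D_def X_def by simp
qed

lemma denom_power_integral_recurrence:
  assumes "0 < r" "r < 1"
  shows "real (Suc m) * (1 - r\<^sup>2)\<^sup>2 * denom_power_integral (Suc (Suc m)) r
         = (1 + r\<^sup>2) * (2 * real m + 1) * denom_power_integral (Suc m) r
           - real m * denom_power_integral m r"
proof -
  let ?I = "\<lambda>n. denom_power_integral n r"
  let ?f = "\<lambda>t. (real (Suc m) * (1 - r\<^sup>2)\<^sup>2 / poisson_denom r t ^ Suc (Suc m)
            + (1 + r\<^sup>2) * (1 - 2 * real (Suc m)) / poisson_denom r t ^ Suc m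
            + real m / poisson_denom r t ^ m) / (2 * r)"
  have "(?f has_integral (real (Suc m) * (1 - r\<^sup>2)\<^sup>2 * ?I (Suc (Suc m))
          + (1 + r\<^sup>2) * (1 - 2 * real (Suc m)) * ?I (Suc m) + real m * ?I m) / (2 * r)) {0..2*pi}"
    using assms by (intro has_integral_divide has_integral_add has_integral_denom_power) simp_all
  moreover have "(?f has_integral 0) {0..2*pi}"
    using fundamental_theorem_of_calculus_real[OF _ sin_over_denom_power_derivative[OF assms],
        of 0 "2*pi"] by simp
  ultimately have "(real (Suc m) * (1 - r\<^sup>2)\<^sup>2 * ?I (Suc (Suc m))
          + (1 + r\<^sup>2) * (1 - 2 * real (Suc m)) * ?I (Suc m) + real m * ?I m) / (2 * r) = 0"
    by (rule has_integral_unique)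
  then show ?thesis
    using assms(1) by (simp add: algebra_simps)
qed

lemma u_mean_recurrence:
  assumes "0 < r" "r < 1"
  shows "real (Suc m) * u_mean (Suc (Suc m)) r
         = (1 + r\<^sup>2) * (2 * real m + 1) * u_mean (Suc m) r - real m * (1 - r\<^sup>2)\<^sup>2 * u_mean m r"
proof -
  let ?I = "\<lambda>n. denom_power_integral n r"
  define x where "x = 1 - r\<^sup>2"
  have shift: "real m * x ^ (2 * m + 1) = real m * x\<^sup>2 * x ^ (2 * m - 1)"
    by (cases m) (simp_all add: power2_eq_square)
  have "real (Suc m) * u_mean (Suc (Suc m)) r
        = x ^ (2 * m + 1) * (real (Suc m) * x\<^sup>2 * ?I (Suc (Suc m))) / (2 * pi)"
    unfolding u_mean_def x_def by (simp add: power2_eq_square algebra_simps)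
  also have "\<dots> = x ^ (2 * m + 1) * ((1 + r\<^sup>2) * (2 * real m + 1) * ?I (Suc m) - real m * ?I m) / (2 * pi)"
    unfolding x_def denom_power_integral_recurrence[OF assms] ..
  also have "\<dots> = (1 + r\<^sup>2) * (2 * real m + 1) * (x ^ (2 * Suc m - 1) * ?I (Suc m) / (2 * pi))
      - real m * x ^ (2 * m + 1) * ?I m / (2 * pi)"
    by (simp add: field_simps)
  also have "\<dots> = (1 + r\<^sup>2) * (2 * real m + 1) * u_mean (Suc m) r - real m * x\<^sup>2 * u_mean m r"
    unfolding u_mean_def x_def[symmetric] shift by simp
  finally show ?thesis
    unfolding x_def .
qed

lemma u_mean_poly: "\<exists>p. \<forall>r\<in>{0<..<1}. u_mean n r = poly p (1 - r)"
proof -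
  have "(\<exists>p. \<forall>r\<in>{0<..<1}. u_mean m r = poly p (1 - r))
        \<and> (\<exists>p. \<forall>r\<in>{0<..<1}. u_mean (Suc m) r = poly p (1 - r))" for m
  proof (induction m)
    case 0
    have "u_mean 0 r = poly 1 (1 - r)" "u_mean (Suc 0) r = poly 1 (1 - r)" if "r \<in> {0<..<1}" for r
      using that denom_power_integral_1[of r, unfolded One_nat_def] power_less_one_iff[of r 2]
      by (auto simp: u_mean_def denom_power_integral_0)
    then show ?case
      by blast
  next
    case (Suc m)
    then obtain p q where p: "\<forall>r\<in>{0<..<1}. u_mean m r = poly p (1 - r)"
      and q: "\<forall>r\<in>{0<..<1}. u_mean (Suc m) r = poly q (1 - r)"
      by blast
    define s where "s = smult (1 / real (Suc m))
      (smult (2 * real m + 1) ([:2, -2, 1:] * q) - smult (real m) ([:0, 2, -1:]\<^sup>2 * p))"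
    have "u_mean (Suc (Suc m)) r = poly s (1 - r)" if r: "r \<in> {0<..<1}" for r
    proof -
      have plus: "poly [:2, -2, 1:] (1 - r) = 1 + r\<^sup>2"
        and minus: "poly [:0, 2, -1:] (1 - r) = 1 - r\<^sup>2"
        by (simp_all add: power2_eq_square algebra_simps)
      have "poly s (1 - r) = ((1 + r\<^sup>2) * (2 * real m + 1) * poly q (1 - r)
          - real m * (1 - r\<^sup>2)\<^sup>2 * poly p (1 - r)) / real (Suc m)"
        unfolding s_def poly_smult poly_diff poly_mult poly_power plus minus
        by (simp add: algebra_simps diff_divide_distrib add_divide_distrib)
      also have "\<dots> = u_mean (Suc (Suc m)) r"
        using u_mean_recurrence[of r m] p q r by (simp add: divide_eq_eq mult.commute)
      finally show ?thesis ..
    qed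
    then show ?case
      using q by blast
  qed
  then show ?thesis
    by blast
qed

lemma u_mean_nonneg:
  assumes "0 \<le> r" "r < 1"
  shows "0 \<le> u_mean n r"
proof -
  have "0 \<le> denom_power_integral n r"
    using has_integral_denom_power[OF assms, of 1 n] unfolding mult_1
  proof (rule has_integral_nonneg)
    show "0 \<le> 1 / poisson_denom r t ^ n" for t
      using poisson_denom_pos[OF assms, of t] by simp
  qed
  moreover have "0 \<le> 1 - r\<^sup>2"
    using assms power_le_one[of r 2] by simp
  ultimately show ?thesis
    unfolding u_mean_def by simp
qed

lemma has_integral_sin_over_denom_power:
  assumes "0 < r" "r < 1"
  shows "((\<lambda>t. sin t / poisson_denom r t ^ Suc (Suc m)) has_integral 0) {0..2*pi}"
proof -
  define k where "k = 2 * r * real (Suc m)"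
  have k: "k \<noteq> 0"
    using assms unfolding k_def by simp
  have deriv: "((\<lambda>t. 1 / poisson_denom r t ^ Suc m) has_real_derivative
                 - k * (sin t / poisson_denom r t ^ Suc (Suc m))) (at t)" for t
  proof -
    define D where "D = poisson_denom r t"
    have D: "D \<noteq> 0"
      using poisson_denom_nonzero assms unfolding D_def by simp
    have "((\<lambda>t. 1 / poisson_denom r t ^ Suc m) has_real_derivative
            (0 * D ^ Suc m - 1 * ((1 + real m) * (2 * r * sin t * D ^ m))) / (D ^ Suc m * D ^ Suc m)) (at t)"
      unfolding D_def using D[unfolded D_def]
      by (intro DERIV_divide DERIV_const DERIV_power_Suc poisson_denom_derivative) simp
    also have "(0 * D ^ Suc m - 1 * ((1 + real m) * (2 * r * sin t * D ^ m))) / (D ^ Suc m * D ^ Suc m)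
        = - k * (sin t / D ^ Suc (Suc m))"
      using D unfolding k_def by (simp add: field_simps)
    finally show ?thesis
      unfolding D_def .
  qed
  have "((\<lambda>t. - k * (sin t / poisson_denom r t ^ Suc (Suc m))) has_integral 0) {0..2*pi}"
    using fundamental_theorem_of_calculus_real[OF _ deriv, of 0 "2*pi"] by (simp add: poisson_denom_def)
  from has_integral_mult_right[OF this, of "- 1 / k"] show ?thesis
    using k by simp
qed

lemma has_integral_one_minus_cos_over_denom_power:
  assumes "0 < r" "r < 1"
  shows "((\<lambda>t. c / poisson_denom r t ^ Suc m * (1 - cos t)) has_integral
           c * (denom_power_integral m r - (1 - r)\<^sup>2 * denom_power_integral (Suc m) r) / (2 * r))
         {0..2*pi}"
proof -
  have "((\<lambda>t. (c / poisson_denom r t ^ m - c * (1 - r)\<^sup>2 / poisson_denom r t ^ Suc m) / (2 * r))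
         has_integral (c * denom_power_integral m r - c * (1 - r)\<^sup>2 * denom_power_integral (Suc m) r)
           / (2 * r)) {0..2*pi}"
    using assms by (intro has_integral_divide has_integral_diff has_integral_denom_power) simp_all
  moreover have "(c / poisson_denom r t ^ m - c * (1 - r)\<^sup>2 / poisson_denom r t ^ Suc m) / (2 * r)
      = c / poisson_denom r t ^ Suc m * (1 - cos t)" for t
  proof -
    define D where "D = poisson_denom r t"
    have D: "D \<noteq> 0"
      using poisson_denom_nonzero assms unfolding D_def by simp
    have key: "D - (1 - r)\<^sup>2 = 2 * r * (1 - cos t)"
      unfolding D_def poisson_denom_eq by simp
    have "c / D ^ Suc m * (1 - cos t) = c * (2 * r * (1 - cos t)) / (2 * r * D ^ Suc m)"
      using assms(1) by simp
    also have "\<dots> = (c / D ^ m - c * (1 - r)\<^sup>2 / D ^ Suc m) / (2 * r)"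
      unfolding key[symmetric] using D assms(1) by (simp add: field_simps)
    finally show ?thesis
      unfolding D_def by simp
  qed
  ultimately show ?thesis
    by (simp add: algebra_simps)
qed

lemma has_integral_u_times_one_minus_cos:
  assumes "0 < r" "r < 1" "2 \<le> \<beta>"
  shows "((\<lambda>t. (1 - r\<^sup>2) ^ (2*\<beta> - 1) / poisson_denom r t ^ \<beta> * (1 - cos t)) has_integral
           pi * ((1 - r\<^sup>2)\<^sup>2 * u_mean (\<beta> - 1) r - (1 - r)\<^sup>2 * u_mean \<beta> r) / r) {0..2*pi}"
proof -
  obtain m where \<beta>: "\<beta> = Suc (Suc m)"
    using assms(3) by (metis add_2_eq_Suc le_Suc_ex)
  define c where "c = (1 - r\<^sup>2) ^ (2*\<beta> - 1)"
  let ?I = "\<lambda>n. denom_power_integral n r"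
  have lower: "c * ?I (Suc m) = 2 * pi * ((1 - r\<^sup>2)\<^sup>2 * u_mean (\<beta> - 1) r)"
    unfolding u_mean_def c_def \<beta> by (simp add: power2_eq_square)
  have upper: "c * ?I \<beta> = 2 * pi * u_mean \<beta> r"
    unfolding u_mean_def c_def by simp
  have "((\<lambda>t. c / poisson_denom r t ^ \<beta> * (1 - cos t)) has_integral
          c * (?I (Suc m) - (1 - r)\<^sup>2 * ?I \<beta>) / (2 * r)) {0..2*pi}"
    unfolding \<beta> by (rule has_integral_one_minus_cos_over_denom_power[OF assms(1,2)])
  also have "c * (?I (Suc m) - (1 - r)\<^sup>2 * ?I \<beta>) / (2 * r)
      = (c * ?I (Suc m) - (1 - r)\<^sup>2 * (c * ?I \<beta>)) / (2 * r)"
    by (simp add: right_diff_distrib mult.left_commute)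
  also have "\<dots> = pi * ((1 - r\<^sup>2)\<^sup>2 * u_mean (\<beta> - 1) r - (1 - r)\<^sup>2 * u_mean \<beta> r) / r"
    unfolding lower upper using assms(1) by (simp add: field_simps)
  finally show ?thesis
    unfolding c_def .
qed

section \<open>Test functions on the circle\<close>

lemma sin_taylor_bound:
  fixes f :: "real \<Rightarrow> 'a::real_normed_vector"
  assumes f': "\<And>t. (f has_vector_derivative f' t) (at t)"
    and f'': "\<And>t. (f' has_vector_derivative f'' t) (at t)"
    and M: "\<And>t. t \<in> {-pi..pi} \<Longrightarrow> norm (f'' t) \<le> M"
    and s: "\<bar>s\<bar> \<le> pi"
  shows "norm (f s - f 0 - sin s *\<^sub>R f' 0) \<le> 18 * (M + norm (f' 0)) * (1 - cos s)"
proof -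
  have segment: "closed_segment 0 s \<subseteq> {-pi..pi}"
    using s by (auto simp: closed_segment_eq_real_ivl split: if_splits)
  have "0 \<le> M"
    using M[of 0] by (simp add: order_trans[OF norm_ge_zero])
  \<comment> \<open>subtracting the sine term makes the first derivative vanish at 0\<close>
  let ?g = "\<lambda>t. f t - sin t *\<^sub>R f' 0"
  have "norm (?g s - ?g 0 - (s - 0) *\<^sub>R (f' 0 - cos 0 *\<^sub>R f' 0)) \<le> (M + norm (f' 0)) * (s - 0)\<^sup>2"
  proof (rule taylor_second_order_bound[where f' = "\<lambda>t. f' t - cos t *\<^sub>R f' 0"
        and f'' = "\<lambda>t. f'' t + sin t *\<^sub>R f' 0"])
    show "(?g has_vector_derivative f' t - cos t *\<^sub>R f' 0) (at t)" for t
      by (rule has_vector_derivative_diff[OF f']) (auto intro!: derivative_eq_intros)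
    show "((\<lambda>t. f' t - cos t *\<^sub>R f' 0) has_vector_derivative f'' t + sin t *\<^sub>R f' 0) (at t)" for t
      by (auto intro!: derivative_eq_intros f'')
    show "norm (f'' t + sin t *\<^sub>R f' 0) \<le> M + norm (f' 0)" if "t \<in> closed_segment 0 s" for t
    proof -
      have "norm (f'' t) \<le> M"
        using M segment that by blast
      moreover have "norm (sin t *\<^sub>R f' 0) \<le> norm (f' 0)"
        by (simp add: abs_sin_le_one mult_left_le_one_le)
      ultimately show ?thesis
        using norm_triangle_ineq[of "f'' t" "sin t *\<^sub>R f' 0"] by linarith
    qed
  qed
  also have "\<dots> \<le> (M + norm (f' 0)) * (18 * (1 - cos s))"
    using \<open>0 \<le> M\<close> square_le_one_minus_cos[OF s] by (intro mult_left_mono) auto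
  finally show ?thesis
    by (simp add: algebra_simps)
qed

lemma C2_circle_continuous: "C2_circle \<phi> \<Longrightarrow> continuous_on UNIV (\<lambda>t. \<phi> (cis t))"
  unfolding C2_circle_def
  by (meson continuous_at_imp_continuous_on has_vector_derivative_continuous)

lemma C2_circle_second_order_bound:
  assumes "C2_circle \<phi>"
  obtains C v where "0 \<le> C" "\<And>t. norm (\<phi> (cis t) - \<phi> 1 - sin t *\<^sub>R v) \<le> C * (1 - cos t)"
proof -
  obtain \<phi>1 \<phi>2 where \<phi>1: "\<And>t. ((\<lambda>\<theta>. \<phi> (cis \<theta>)) has_vector_derivative \<phi>1 t) (at t)"
    and \<phi>2: "\<And>t. (\<phi>1 has_vector_derivative \<phi>2 t) (at t)" and cont: "continuous_on UNIV \<phi>2"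
    using assms unfolding C2_circle_def by blast
  have "bounded (\<phi>2 ` {-pi..pi})"
    by (intro compact_imp_bounded compact_continuous_image continuous_on_subset[OF cont]) auto
  then obtain M where M: "\<And>t. t \<in> {-pi..pi} \<Longrightarrow> norm (\<phi>2 t) \<le> M"
    unfolding bounded_iff by blast
  have "0 \<le> M"
    using M[of 0] by (simp add: order_trans[OF norm_ge_zero])
  show ?thesis
  proof (rule that)
    show "0 \<le> 18 * (M + norm (\<phi>1 0))"
      using \<open>0 \<le> M\<close> by simp
    fix t
    obtain s where s: "- pi < s" "s \<le> pi" "sin s = sin t" "cos s = cos t"
      using sincos_principal_value by blast
    then have "cis s = cis t"
      by (simp add: complex_eq_iff)
    with sin_taylor_bound[OF \<phi>1 \<phi>2 M, of s] s
    show "norm (\<phi> (cis t) - \<phi> 1 - sin t *\<^sub>R \<phi>1 0) \<le> 18 * (M + norm (\<phi>1 0)) * (1 - cos t)"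
      by simp
  qed
qed

section \<open>Pairing u_r with a test function\<close>

lemma pairing_u_fun_eq:
  assumes "0 < r" "r < 1" "2 \<le> \<beta>"
    and cont: "continuous_on UNIV (\<lambda>t. \<phi> (cis t))"
  shows "pairing (restr (u_fun \<beta>) r) \<phi> = of_real (u_mean \<beta> r) * \<phi> 1
           + integral {0..2*pi} (\<lambda>t. of_real ((1 - r\<^sup>2) ^ (2*\<beta> - 1) / poisson_denom r t ^ \<beta>)
                                    * (\<phi> (cis t) - \<phi> 1 - sin t *\<^sub>R v)) / of_real (2 * pi)"
proof -
  obtain m where \<beta>: "\<beta> = Suc (Suc m)"
    using assms(3) by (metis add_2_eq_Suc le_Suc_ex)
  define c where "c = (1 - r\<^sup>2) ^ (2*\<beta> - 1)"
  define K where "K t = c / poisson_denom r t ^ \<beta>" for t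
  define R where "R t = \<phi> (cis t) - \<phi> 1 - sin t *\<^sub>R v" for t
  define J where "J = integral {0..2*pi} (\<lambda>t. of_real (K t) * R t)"
  have r: "0 \<le> r" "r < 1"
    using assms by simp_all
  have integrand: "restr (u_fun \<beta>) r (cis t) * \<phi> (cis t)
      = of_real (K t) * \<phi> 1 + of_real (K t * sin t) * v + of_real (K t) * R t" for t
  proof -
    have "restr (u_fun \<beta>) r (cis t) = of_real (K t)"
      unfolding restr_def K_def c_def u_fun_polar[OF r(1)] ..
    moreover have "\<phi> (cis t) = \<phi> 1 + of_real (sin t) * v + R t"
      unfolding R_def by (simp add: scaleR_conv_of_real)
    ultimately show ?thesis
      by (simp add: algebra_simps)
  qed
  have "continuous_on {0..2*pi} (\<lambda>t. of_real (K t) * R t)"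
    unfolding K_def R_def using poisson_denom_nonzero[OF r]
    by (intro continuous_intros continuous_on_subset[OF cont]) auto
  then have J: "((\<lambda>t. of_real (K t) * R t) has_integral J) {0..2*pi}"
    unfolding J_def by (intro integrable_integral integrable_continuous_interval)
  have "((\<lambda>t. of_real (K t) * \<phi> 1) has_integral of_real (2 * pi * u_mean \<beta> r) * \<phi> 1) {0..2*pi}"
    using has_integral_denom_power[OF r, of c \<beta>] unfolding K_def c_def u_mean_def
    by (intro has_integral_mult_left has_integral_of_real) simp
  moreover have "((\<lambda>t. of_real (K t * sin t) * v) has_integral 0) {0..2*pi}"
  proof -
    have eq: "(\<lambda>t. of_real (K t * sin t) * v)
        = (\<lambda>t. of_real (c * (sin t / poisson_denom r t ^ Suc (Suc m))) * v)"
      unfolding K_def \<beta> by auto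
    from has_integral_mult_left[OF has_integral_of_real[OF has_integral_mult_right[OF
          has_integral_sin_over_denom_power[OF assms(1,2), of m], of c]], of v]
    show ?thesis
      unfolding eq mult_zero_right of_real_0 mult_zero_left .
  qed
  ultimately have "((\<lambda>t. restr (u_fun \<beta>) r (cis t) * \<phi> (cis t)) has_integral
      of_real (2 * pi * u_mean \<beta> r) * \<phi> 1 + 0 + J) {0..2*pi}"
    unfolding integrand by (intro has_integral_add J)
  then show ?thesis
    unfolding pairing_def J_def K_def R_def c_def by (simp add: integral_unique field_simps)
qed

lemma norm_integral_u_times_remainder_le:
  fixes \<phi> :: "complex \<Rightarrow> complex"
  assumes "0 < r" "r < 1" "2 \<le> \<beta>"
    and cont: "continuous_on UNIV (\<lambda>t. \<phi> (cis t))"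
    and "0 \<le> C" and remainder: "\<And>t. norm (\<phi> (cis t) - \<phi> 1 - sin t *\<^sub>R v) \<le> C * (1 - cos t)"
  shows "norm (integral {0..2*pi} (\<lambda>t. of_real ((1 - r\<^sup>2) ^ (2*\<beta> - 1) / poisson_denom r t ^ \<beta>)
                                        * (\<phi> (cis t) - \<phi> 1 - sin t *\<^sub>R v)))
           \<le> C * (pi * (1 - r\<^sup>2)\<^sup>2 * u_mean (\<beta> - 1) r / r)"
proof -
  define K where "K t = (1 - r\<^sup>2) ^ (2*\<beta> - 1) / poisson_denom r t ^ \<beta>" for t
  have r: "0 \<le> r" "r < 1"
    using assms by simp_all
  have K_nonneg: "0 \<le> K t" for t
    unfolding K_def using poisson_denom_pos[OF r, of t] r power_le_one[of r 2] by simp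
  have moment: "((\<lambda>t. C * (K t * (1 - cos t))) has_integral
      C * (pi * ((1 - r\<^sup>2)\<^sup>2 * u_mean (\<beta> - 1) r - (1 - r)\<^sup>2 * u_mean \<beta> r) / r)) {0..2*pi}"
    unfolding K_def by (intro has_integral_mult_right has_integral_u_times_one_minus_cos assms)
  have "continuous_on {0..2*pi} (\<lambda>t. of_real (K t) * (\<phi> (cis t) - \<phi> 1 - sin t *\<^sub>R v))"
    unfolding K_def using poisson_denom_nonzero[OF r]
    by (intro continuous_intros continuous_on_subset[OF cont]) auto
  then have "norm (integral {0..2*pi} (\<lambda>t. of_real (K t) * (\<phi> (cis t) - \<phi> 1 - sin t *\<^sub>R v)))
      \<le> integral {0..2*pi} (\<lambda>t. C * (K t * (1 - cos t)))"
  proof (rule integral_norm_bound_integral[OF integrable_continuous_interval])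
    show "(\<lambda>t. C * (K t * (1 - cos t))) integrable_on {0..2*pi}"
      using moment by blast
    show "norm (of_real (K t) * (\<phi> (cis t) - \<phi> 1 - sin t *\<^sub>R v)) \<le> C * (K t * (1 - cos t))" for t
      using mult_left_mono[OF remainder[of t] K_nonneg[of t]] K_nonneg[of t]
      by (simp add: norm_mult mult.left_commute)
  qed
  also have "\<dots> = C * (pi * ((1 - r\<^sup>2)\<^sup>2 * u_mean (\<beta> - 1) r - (1 - r)\<^sup>2 * u_mean \<beta> r) / r)"
    using moment by (rule integral_unique)
  also have "\<dots> \<le> C * (pi * (1 - r\<^sup>2)\<^sup>2 * u_mean (\<beta> - 1) r / r)"
    using u_mean_nonneg[OF r, of \<beta>] assms(1,5)
    by (intro mult_left_mono divide_right_mono) (simp_all add: algebra_simps)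
  finally show ?thesis
    unfolding K_def .
qed

lemma pairing_u_fun_mean_bound:
  assumes "0 < r" "r < 1" "2 \<le> \<beta>"
    and "continuous_on UNIV (\<lambda>t. \<phi> (cis t))"
    and "0 \<le> C" and "\<And>t. norm (\<phi> (cis t) - \<phi> 1 - sin t *\<^sub>R v) \<le> C * (1 - cos t)"
  shows "norm (pairing (restr (u_fun \<beta>) r) \<phi> - of_real (u_mean \<beta> r) * \<phi> 1)
           \<le> C * (1 - r\<^sup>2)\<^sup>2 * u_mean (\<beta> - 1) r / (2 * r)"
proof -
  have "norm (pairing (restr (u_fun \<beta>) r) \<phi> - of_real (u_mean \<beta> r) * \<phi> 1)
      = norm (integral {0..2*pi} (\<lambda>t. of_real ((1 - r\<^sup>2) ^ (2*\<beta> - 1) / poisson_denom r t ^ \<beta>)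
                                        * (\<phi> (cis t) - \<phi> 1 - sin t *\<^sub>R v))) / (2 * pi)"
    using pairing_u_fun_eq[OF assms(1-4), of v] by (simp add: norm_divide)
  also have "\<dots> \<le> C * (pi * (1 - r\<^sup>2)\<^sup>2 * u_mean (\<beta> - 1) r / r) / (2 * pi)"
    using norm_integral_u_times_remainder_le[OF assms] by (rule divide_right_mono) simp
  also have "\<dots> = C * (1 - r\<^sup>2)\<^sup>2 * u_mean (\<beta> - 1) r / (2 * r)"
    by (simp add: field_simps)
  finally show ?thesis .
qed

lemma pairing_u_fun_expansion_bound:
  assumes "0 < r" "r < 1" "2 \<le> \<beta>"
    and "continuous_on UNIV (\<lambda>t. \<phi> (cis t))"
    and "0 \<le> C" and "\<And>t. norm (\<phi> (cis t) - \<phi> 1 - sin t *\<^sub>R v) \<le> C * (1 - cos t)"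
    and mean: "u_mean \<beta> r = a + b * (1 - r) + (1 - r)\<^sup>2 * e"
  shows "norm (pairing (restr (u_fun \<beta>) r) \<phi> - of_real a * \<phi> 1 - of_real b * of_real (1 - r) * \<phi> 1)
           \<le> (norm (\<phi> 1) * \<bar>e\<bar> + C * (1 + r)\<^sup>2 * u_mean (\<beta> - 1) r / (2 * r))
             * norm (of_real ((1 - r)\<^sup>2) :: complex)"
proof -
  have "pairing (restr (u_fun \<beta>) r) \<phi> - of_real a * \<phi> 1 - of_real b * of_real (1 - r) * \<phi> 1
      = of_real ((1 - r)\<^sup>2 * e) * \<phi> 1
        + (pairing (restr (u_fun \<beta>) r) \<phi> - of_real (u_mean \<beta> r) * \<phi> 1)"
    unfolding mean by (simp add: algebra_simps)
  also have "norm \<dots> \<le> (1 - r)\<^sup>2 * \<bar>e\<bar> * norm (\<phi> 1) + C * (1 - r\<^sup>2)\<^sup>2 * u_mean (\<beta> - 1) r / (2 * r)"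
  proof (rule norm_triangle_le[OF add_mono])
    show "norm (of_real ((1 - r)\<^sup>2 * e) * \<phi> 1) \<le> (1 - r)\<^sup>2 * \<bar>e\<bar> * norm (\<phi> 1)"
      by (simp only: norm_mult norm_of_real abs_mult abs_power2 order_refl)
  qed (rule pairing_u_fun_mean_bound[OF assms(1-6)])
  also have "\<dots> = (norm (\<phi> 1) * \<bar>e\<bar> + C * (1 + r)\<^sup>2 * u_mean (\<beta> - 1) r / (2 * r)) * (1 - r)\<^sup>2"
  proof -
    have "(1 - r\<^sup>2)\<^sup>2 = (1 - r)\<^sup>2 * (1 + r)\<^sup>2"
      by (simp add: power2_eq_square algebra_simps)
    then show ?thesis
      by (simp add: algebra_simps)
  qed
  also have "\<dots> = (norm (\<phi> 1) * \<bar>e\<bar> + C * (1 + r)\<^sup>2 * u_mean (\<beta> - 1) r / (2 * r))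
      * norm (of_real ((1 - r)\<^sup>2) :: complex)"
    by (simp only: norm_of_real abs_power2)
  finally show ?thesis .
qed

theorem theorem1p1:
  fixes \<beta> :: nat
  assumes "\<beta> \<ge> 2"
  shows "\<exists>a b :: real. \<forall>\<phi>. C2_circle \<phi> \<longrightarrow>
           (\<lambda>r. pairing (restr (u_fun \<beta>) r) \<phi>
                 - of_real a * \<phi> 1 - of_real b * of_real (1 - r) * \<phi> 1)
             \<in> O[at_left 1](\<lambda>r. of_real ((1 - r)^2) :: complex)"
proof -
  obtain p where p: "\<forall>r\<in>{0<..<1}. u_mean \<beta> r = poly p (1 - r)"
    using u_mean_poly by blast
  obtain p' where p': "\<forall>r\<in>{0<..<1}. u_mean (\<beta> - 1) r = poly p' (1 - r)"
    using u_mean_poly by blast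
  obtain a b q where abq: "p = pCons a (pCons b q)"
    by (metis pCons_cases)
  show ?thesis
  proof (intro exI allI impI)
    fix \<phi> :: "complex \<Rightarrow> complex"
    assume \<phi>: "C2_circle \<phi>"
    then obtain C v where "0 \<le> C" "\<And>t. norm (\<phi> (cis t) - \<phi> 1 - sin t *\<^sub>R v) \<le> C * (1 - cos t)"
      using C2_circle_second_order_bound by blast
    note bound = pairing_u_fun_expansion_bound[OF _ _ assms C2_circle_continuous[OF \<phi>] this]
    let ?h = "\<lambda>r. norm (\<phi> 1) * \<bar>poly q (1 - r)\<bar> + C * (1 + r)\<^sup>2 * poly p' (1 - r) / (2 * r)"
    have "\<forall>\<^sub>F r in at_left 1.
        norm (pairing (restr (u_fun \<beta>) r) \<phi> - of_real a * \<phi> 1 - of_real b * of_real (1 - r) * \<phi> 1)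
          \<le> ?h r * norm (of_real ((1 - r)\<^sup>2) :: complex)"
    proof (rule eventually_at_leftI[of 0])
      fix r :: real
      assume r: "r \<in> {0<..<1}"
      have "u_mean \<beta> r = a + b * (1 - r) + (1 - r)\<^sup>2 * poly q (1 - r)"
        using bspec[OF p r] unfolding abq by (simp add: power2_eq_square algebra_simps)
      with bound[of r] bspec[OF p' r] r show "norm (pairing (restr (u_fun \<beta>) r) \<phi> - of_real a * \<phi> 1
          - of_real b * of_real (1 - r) * \<phi> 1) \<le> ?h r * norm (of_real ((1 - r)\<^sup>2) :: complex)"
        by simp
    qed simp
    moreover have "(?h \<longlongrightarrow> ?h 1) (at_left 1)"
      by (intro tendsto_intros) auto
    ultimately show "(\<lambda>r. pairing (restr (u_fun \<beta>) r) \<phi> - of_real a * \<phi> 1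
        - of_real b * of_real (1 - r) * \<phi> 1) \<in> O[at_left 1](\<lambda>r. of_real ((1 - r)^2) :: complex)"
      by (rule bigoI_tendsto_factor)
  qed
qed

end
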